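(* For every cosieve $J\colon\mathbf{A}\to\mathbf{B}$ there is exactly one lens whose get functor is $J$, and this lens is a monomorphism in $\mathbf{Lens}$; conversely, the get functor of every monomorphism in $\mathbf{Lens}$ is a cosieve. Thus $U$ restricts to a bijection between monic lenses and cosieves.
   Context: A lens $F\colon \mathbf{A}\to\mathbf{B}$ between small categories consists of a functor $F\colon\mathbf{A}\to\mathbf{B}$ (the get functor) together with, for each object $A$ of $\mathbf{A}$, a function $\varphi_{F,A}$ from the set of morphisms of $\mathbf{B}$ with domain $FA$ to the set of morphisms of $\mathbf{A}$ with domain $A$, such that: $F(\varphi_{F,A}b)=b$; $\varphi_{F,A}(\mathrm{id}_{FA})=\mathrm{id}_A$; and $\varphi_{F,A}(b'\circ b)=\varphi_{F,A'}(b')\circ\varphi_{F,A}(b)$ whenever $b$ has domain $FA$, $A'$ is the codomain of $\varphi_{F,A}b$, and $b'$ has domain $FA'$. $\mathbf{Lens}$ is the category of small categories and lenses, with composite of $F\colon\mathbf{A}\to\mathbf{B}$, $G\colon\mathbf{B}\to\mathbf{C}$ having get functor $G\circ F$ and puts $\varphi_{G\circ F,A}(c)=\varphi_{F,A}(\varphi_{G,FA}(c))$. $U\colon\mathbf{Lens}\to\mathbf{Cat}$ sends a lens to its get functor. A functor $F\colon\mathbf{A}\to\mathbf{B}$ is a discrete opfibration if for each object $A$ of $\mathbf{A}$ and each morphism $b$ of $\mathbf{B}$ with domain $FA$ there is a unique morphism $a$ of $\mathbf{A}$ with domain $A$ and $Fa=b$. A cosieve is a discrete opfibration that is injective on objects.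 *)

theory Defs
  imports Main
begin

text \<open>Small categories, represented concretely: a set of objects, a set of
morphisms, domain, codomain, identities and composition (Comp g f = g after f).\<close>

record ('o, 'm) cat =
  Obj  :: "'o set"
  Mor  :: "'m set"
  Dom  :: "'m \<Rightarrow> 'o"
  Cod  :: "'m \<Rightarrow> 'o"
  Ide  :: "'o \<Rightarrow> 'm"
  Comp :: "'m \<Rightarrow> 'm \<Rightarrow> 'm"

definition is_category :: "('o, 'm) cat \<Rightarrow> bool" where
  "is_category C \<longleftrightarrow>
     (\<forall>f\<in>Mor C. Dom C f \<in> Obj C \<and> Cod C f \<in> Obj C) \<and>
     (\<forall>x\<in>Obj C. Ide C x \<in> Mor C \<and> Dom C (Ide C x) = x \<and> Cod C (Ide C x) = x) \<and>
     (\<forall>f\<in>Mor C. \<forall>g\<in>Mor C. Cod C f = Dom C g \<longrightarrow>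
        Comp C g f \<in> Mor C \<and> Dom C (Comp C g f) = Dom C f \<and> Cod C (Comp C g f) = Cod C g) \<and>
     (\<forall>f\<in>Mor C. Comp C f (Ide C (Dom C f)) = f \<and> Comp C (Ide C (Cod C f)) f = f) \<and>
     (\<forall>f\<in>Mor C. \<forall>g\<in>Mor C. \<forall>h\<in>Mor C. Cod C f = Dom C g \<longrightarrow> Cod C g = Dom C h \<longrightarrow>
        Comp C h (Comp C g f) = Comp C (Comp C h g) f)"

text \<open>A functor given by its object map and morphism map (only their values on
the carriers matter).\<close>

definition is_functor ::
  "('oa, 'ma) cat \<Rightarrow> ('ob, 'mb) cat \<Rightarrow> ('oa \<Rightarrow> 'ob) \<Rightarrow> ('ma \<Rightarrow> 'mb) \<Rightarrow> bool" where
  "is_functor A B Fo Fm \<longleftrightarrow>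
     (\<forall>x\<in>Obj A. Fo x \<in> Obj B) \<and>
     (\<forall>f\<in>Mor A. Fm f \<in> Mor B \<and> Dom B (Fm f) = Fo (Dom A f) \<and> Cod B (Fm f) = Fo (Cod A f)) \<and>
     (\<forall>x\<in>Obj A. Fm (Ide A x) = Ide B (Fo x)) \<and>
     (\<forall>f\<in>Mor A. \<forall>g\<in>Mor A. Cod A f = Dom A g \<longrightarrow> Fm (Comp A g f) = Comp B (Fm g) (Fm f))"

text \<open>A lens: get functor (object map, morphism map) together with the put
operation  put x b  (x an object of A, b a morphism of B with domain get x).\<close>

type_synonym ('oa, 'ma, 'ob, 'mb) lens =
  "('oa \<Rightarrow> 'ob) \<times> ('ma \<Rightarrow> 'mb) \<times> ('oa \<Rightarrow> 'mb \<Rightarrow> 'ma)"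

definition is_lens ::
  "('oa, 'ma) cat \<Rightarrow> ('ob, 'mb) cat \<Rightarrow> ('oa, 'ma, 'ob, 'mb) lens \<Rightarrow> bool" where
  "is_lens A B F \<longleftrightarrow> (case F of (Fo, Fm, put) \<Rightarrow>
     is_functor A B Fo Fm \<and>
     (\<forall>x\<in>Obj A. \<forall>b\<in>Mor B. Dom B b = Fo x \<longrightarrow>
        put x b \<in> Mor A \<and> Dom A (put x b) = x \<and> Fm (put x b) = b) \<and>
     (\<forall>x\<in>Obj A. put x (Ide B (Fo x)) = Ide A x) \<and>
     (\<forall>x\<in>Obj A. \<forall>b\<in>Mor B. \<forall>b'\<in>Mor B. Dom B b = Fo x \<longrightarrow>
        Dom B b' = Fo (Cod A (put x b)) \<longrightarrow>
        put x (Comp B b' b) = Comp A (put (Cod A (put x b)) b') (put x b)))"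

definition lens_eq ::
  "('oa, 'ma) cat \<Rightarrow> ('ob, 'mb) cat \<Rightarrow> ('oa, 'ma, 'ob, 'mb) lens \<Rightarrow> ('oa, 'ma, 'ob, 'mb) lens \<Rightarrow> bool" where
  "lens_eq A B F G \<longleftrightarrow> (case F of (Fo, Fm, p) \<Rightarrow> case G of (Go, Gm, q) \<Rightarrow>
     (\<forall>x\<in>Obj A. Fo x = Go x) \<and> (\<forall>f\<in>Mor A. Fm f = Gm f) \<and>
     (\<forall>x\<in>Obj A. \<forall>b\<in>Mor B. Dom B b = Fo x \<longrightarrow> p x b = q x b))"

definition lens_comp ::
  "('ob, 'mb, 'oc, 'mc) lens \<Rightarrow> ('oa, 'ma, 'ob, 'mb) lens \<Rightarrow> ('oa, 'ma, 'oc, 'mc) lens" where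
  "lens_comp G F = (case G of (Go, Gm, q) \<Rightarrow> case F of (Fo, Fm, p) \<Rightarrow>
     (Go \<circ> Fo, Gm \<circ> Fm, \<lambda>x c. p x (q (Fo x) c)))"

text \<open>Monomorphism in Lens.  The test categories range over all small categories
whose objects and morphisms live in the types 'x and 'y (the "universe"),
fixed via the itself-argument.\<close>

definition lens_mono ::
  "('x \<times> 'y) itself \<Rightarrow> ('oa, 'ma) cat \<Rightarrow> ('ob, 'mb) cat \<Rightarrow> ('oa, 'ma, 'ob, 'mb) lens \<Rightarrow> bool" where
  "lens_mono U A B F \<longleftrightarrow>
     (\<forall>(X :: ('x, 'y) cat) G H. is_category X \<and> is_lens X A G \<and> is_lens X A H \<and>
        lens_eq X B (lens_comp F G) (lens_comp F H) \<longrightarrow> lens_eq X A G H)"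

definition discrete_opfibration ::
  "('oa, 'ma) cat \<Rightarrow> ('ob, 'mb) cat \<Rightarrow> ('oa \<Rightarrow> 'ob) \<Rightarrow> ('ma \<Rightarrow> 'mb) \<Rightarrow> bool" where
  "discrete_opfibration A B Fo Fm \<longleftrightarrow> is_functor A B Fo Fm \<and>
     (\<forall>x\<in>Obj A. \<forall>b\<in>Mor B. Dom B b = Fo x \<longrightarrow> (\<exists>!a. a \<in> Mor A \<and> Dom A a = x \<and> Fm a = b))"

definition cosieve ::
  "('oa, 'ma) cat \<Rightarrow> ('ob, 'mb) cat \<Rightarrow> ('oa \<Rightarrow> 'ob) \<Rightarrow> ('ma \<Rightarrow> 'mb) \<Rightarrow> bool" where
  "cosieve A B Fo Fm \<longleftrightarrow> discrete_opfibration A B Fo Fm \<and> inj_on Fo (Obj A)"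

end

theory Submission
  imports Defs
begin

text \<open>If the get functor of a lens is a discrete opfibration, its put has no freedom: put x b
must be the unique lift of b at x. Hence such a lens exists and is unique, and for a cosieve,
injectivity on objects together with uniqueness of lifts lets one cancel it on the left.

Conversely, let F be a monic lens and K the kernel pair of its get functor, the category of
pairs of objects and of morphisms of A with equal images. Using the put of F, both projections
K \<rightarrow> A carry lens structures that agree after composing with F, so they are equal. Thus
K is the diagonal, which says precisely that F is injective on objects and that lifts are
unique. Monicity only quantifies over test categories in the fixed universe types, so K is
first transported there along injections.\<close>

lemma is_lens_functor: "is_lens A B (Fo, Fm, p) \<Longrightarrow> is_functor A B Fo Fm"
  by (simp add: is_lens_def)

lemma is_lens_put:
  assumes "is_lens A B (Fo, Fm, p)" "x \<in> Obj A" "b \<in> Mor B" "Dom B b = Fo x"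
  shows "p x b \<in> Mor A" "Dom A (p x b) = x" "Fm (p x b) = b"
  using assms by (auto simp: is_lens_def)

lemma is_lens_put_ide:
  "is_lens A B (Fo, Fm, p) \<Longrightarrow> x \<in> Obj A \<Longrightarrow> p x (Ide B (Fo x)) = Ide A x"
  by (simp add: is_lens_def)

lemma is_lens_put_comp:
  assumes "is_lens A B (Fo, Fm, p)" "x \<in> Obj A" "b \<in> Mor B" "b' \<in> Mor B" "Dom B b = Fo x"
    "Dom B b' = Fo (Cod A (p x b))"
  shows "p x (Comp B b' b) = Comp A (p (Cod A (p x b)) b') (p x b)"
  using assms by (simp add: is_lens_def)

definition opfib_lift :: "('oa, 'ma) cat \<Rightarrow> ('ma \<Rightarrow> 'mb) \<Rightarrow> 'oa \<Rightarrow> 'mb \<Rightarrow> 'ma" where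
  "opfib_lift A Fm x b = (THE a. a \<in> Mor A \<and> Dom A a = x \<and> Fm a = b)"

lemma discrete_opfibration_functor:
  "discrete_opfibration A B Fo Fm \<Longrightarrow> is_functor A B Fo Fm"
  by (simp add: discrete_opfibration_def)

lemma cosieve_discrete_opfibration: "cosieve A B Fo Fm \<Longrightarrow> discrete_opfibration A B Fo Fm"
  by (simp add: cosieve_def)

lemma opfib_lift_is_lift:
  assumes "discrete_opfibration A B Fo Fm" "x \<in> Obj A" "b \<in> Mor B" "Dom B b = Fo x"
  shows "opfib_lift A Fm x b \<in> Mor A" "Dom A (opfib_lift A Fm x b) = x"
    "Fm (opfib_lift A Fm x b) = b"
proof -
  have "\<exists>!a. a \<in> Mor A \<and> Dom A a = x \<and> Fm a = b"
    using assms by (simp add: discrete_opfibration_def)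
  from theI'[OF this] show "opfib_lift A Fm x b \<in> Mor A" "Dom A (opfib_lift A Fm x b) = x"
    "Fm (opfib_lift A Fm x b) = b" unfolding opfib_lift_def by blast+
qed

lemma opfib_lift_unique:
  assumes "discrete_opfibration A B Fo Fm" "a \<in> Mor A" "Dom A a \<in> Obj A"
  shows "opfib_lift A Fm (Dom A a) (Fm a) = a"
proof -
  have "Fm a \<in> Mor B" "Dom B (Fm a) = Fo (Dom A a)"
    using assms discrete_opfibration_functor[OF assms(1)] by (auto simp: is_functor_def)
  then have "\<exists>!a'. a' \<in> Mor A \<and> Dom A a' = Dom A a \<and> Fm a' = Fm a"
    using assms by (simp add: discrete_opfibration_def)
  then show ?thesis
    unfolding opfib_lift_def using assms(2) by (blast intro: the1_equality)
qed

lemma discrete_opfibration_is_lens: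
  assumes A: "is_category A" and J: "discrete_opfibration A B Fo Fm"
  shows "is_lens A B (Fo, Fm, opfib_lift A Fm)"
proof -
  note F = discrete_opfibration_functor[OF J]
  note lift = opfib_lift_is_lift[OF J] and lift_unique = opfib_lift_unique[OF J]
  have "opfib_lift A Fm x (Ide B (Fo x)) = Ide A x" if "x \<in> Obj A" for x
    using lift_unique[of "Ide A x"] that A F by (auto simp: is_category_def is_functor_def)
  moreover have
    "opfib_lift A Fm x (Comp B b' b) = Comp A (opfib_lift A Fm y b') (opfib_lift A Fm x b)"
    if "x \<in> Obj A" "b \<in> Mor B" "b' \<in> Mor B" "Dom B b = Fo x"
      and y: "y = Cod A (opfib_lift A Fm x b)" "Dom B b' = Fo y" for x b b' y
  proof -
    have "y \<in> Obj A" using lift[OF that(1,2,4)] A y(1) by (auto simp: is_category_def)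
    with lift[OF that(1,2,4)] lift[OF _ that(3) y(2)] y(1)
    show ?thesis using A F lift_unique[of "Comp A (opfib_lift A Fm y b') (opfib_lift A Fm x b)"]
      by (auto simp: is_category_def is_functor_def)
  qed
  ultimately show ?thesis
    using F lift by (simp add: is_lens_def)
qed

lemma discrete_opfibration_lens_put:
  assumes J: "discrete_opfibration A B Fo Fm" and L: "is_lens A B (Fo, Fm, p)"
    and "x \<in> Obj A" "b \<in> Mor B" "Dom B b = Fo x"
  shows "p x b = opfib_lift A Fm x b"
  using opfib_lift_unique[OF J, of "p x b"] is_lens_put[OF L assms(3-5)] assms(3) by simp

corollary discrete_opfibration_lens_unique:
  assumes "discrete_opfibration A B Fo Fm" "is_lens A B (Fo, Fm, p)" "is_lens A B (Fo, Fm, q)"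
  shows "lens_eq A B (Fo, Fm, p) (Fo, Fm, q)"
  using discrete_opfibration_lens_put[OF assms(1,2)] discrete_opfibration_lens_put[OF assms(1,3)]
  by (simp add: lens_eq_def)

lemma discrete_opfibration_put_get:
  assumes "discrete_opfibration A B Fo Fm" "is_lens A B (Fo, Fm, p)"
    and "a \<in> Mor A" "Dom A a \<in> Obj A"
  shows "p (Dom A a) (Fm a) = a"
  using assms discrete_opfibration_lens_put[OF assms(1,2)] opfib_lift_unique[OF assms(1)]
    discrete_opfibration_functor[OF assms(1)] by (simp add: is_functor_def)

lemma cosieve_lens_mono:
  assumes J: "cosieve A B Jo Jm" and L: "is_lens A B (Jo, Jm, put)"
  shows "lens_mono U A B (Jo, Jm, put)"
  unfolding lens_mono_def
proof (intro allI impI, elim conjE)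
  fix X :: "('x, 'y) cat" and G H
  assume X: "is_category X" and G: "is_lens X A G" and H: "is_lens X A H"
    and E: "lens_eq X B (lens_comp (Jo, Jm, put) G) (lens_comp (Jo, Jm, put) H)"
  obtain Go Gm p Ho Hm q where GH: "G = (Go, Gm, p)" "H = (Ho, Hm, q)"
    by (cases G, cases H) auto
  note J' = cosieve_discrete_opfibration[OF J]
  have FG: "is_functor X A Go Gm" and FH: "is_functor X A Ho Hm"
    using G H GH is_lens_functor by blast+
  have obj: "Go x = Ho x" if "x \<in> Obj X" for x
  proof -
    have "Jo (Go x) = Jo (Ho x)" using E that GH by (simp add: lens_eq_def lens_comp_def)
    then show ?thesis using J FG FH that by (auto simp: cosieve_def inj_on_def is_functor_def)
  qed
  have mor: "Gm f = Hm f" if f: "f \<in> Mor X" for f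
  proof -
    have "Jm (Gm f) = Jm (Hm f)" using E f GH by (simp add: lens_eq_def lens_comp_def)
    moreover have "Dom X f \<in> Obj X" using X f by (simp add: is_category_def)
    ultimately show ?thesis
      using FG FH f obj opfib_lift_unique[OF J', of "Gm f"] opfib_lift_unique[OF J', of "Hm f"]
      by (auto simp: is_functor_def)
  qed
  have put: "p x b = q x b" if x: "x \<in> Obj X" and b: "b \<in> Mor A" "Dom A b = Go x" for x b
  proof -
    have "Jm b \<in> Mor B" "Dom B (Jm b) = Jo (Go x)"
      using b discrete_opfibration_functor[OF J'] by (auto simp: is_functor_def)
    then have "p x (put (Go x) (Jm b)) = q x (put (Ho x) (Jm b))"
      using E x GH by (simp add: lens_eq_def lens_comp_def)
    moreover have "Go x \<in> Obj A" using FG x by (simp add: is_functor_def)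
    ultimately show ?thesis using discrete_opfibration_put_get[OF J' L b(1)] b obj[OF x] by simp
  qed
  show "lens_eq X A G H" using obj mor put GH by (simp add: lens_eq_def)
qed

definition transport_cat :: "('o \<Rightarrow> 'x) \<Rightarrow> ('m \<Rightarrow> 'y) \<Rightarrow> ('o, 'm) cat \<Rightarrow> ('x, 'y) cat" where
  "transport_cat i j C = \<lparr>Obj = i ` Obj C, Mor = j ` Mor C,
     Dom = (\<lambda>m. i (Dom C (inv j m))), Cod = (\<lambda>m. i (Cod C (inv j m))),
     Ide = (\<lambda>x. j (Ide C (inv i x))), Comp = (\<lambda>g f. j (Comp C (inv j g) (inv j f)))\<rparr>"

definition transport_lens ::
  "('o \<Rightarrow> 'x) \<Rightarrow> ('m \<Rightarrow> 'y) \<Rightarrow> ('o, 'm, 'oa, 'ma) lens \<Rightarrow> ('x, 'y, 'oa, 'ma) lens" where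
  "transport_lens i j G =
     (case G of (Go, Gm, p) \<Rightarrow> (Go \<circ> inv i, Gm \<circ> inv j, \<lambda>x b. j (p (inv i x) b)))"

lemma is_category_transport_cat:
  assumes "is_category C" "inj i" "inj j"
  shows "is_category (transport_cat i j C)"
  using assms unfolding is_category_def transport_cat_def by (simp add: inj_eq)

lemma is_lens_transport_lens:
  assumes "is_lens C A G" "inj i" "inj j"
  shows "is_lens (transport_cat i j C) A (transport_lens i j G)"
  using assms unfolding is_lens_def is_functor_def transport_cat_def transport_lens_def
  by (cases G) (simp add: inj_eq)

lemma lens_eq_comp_transport_lens:
  assumes "lens_eq C B (lens_comp F G) (lens_comp F H)" "inj i" "inj j"
  shows "lens_eq (transport_cat i j C) B (lens_comp F (transport_lens i j G))
    (lens_comp F (transport_lens i j H))"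
  using assms unfolding lens_eq_def lens_comp_def transport_cat_def transport_lens_def
  by (cases F, cases G, cases H) simp

lemma lens_eq_transport_lens_iff:
  assumes "inj i" "inj j"
  shows "lens_eq (transport_cat i j C) A (transport_lens i j G) (transport_lens i j H) \<longleftrightarrow>
    lens_eq C A G H"
  using assms unfolding lens_eq_def transport_cat_def transport_lens_def
  by (cases G, cases H) (simp add: inj_eq)

lemma lens_mono_transport:
  assumes "lens_mono (U :: ('x \<times> 'y) itself) A B F"
    and "inj (i :: 'o \<Rightarrow> 'x)" "inj (j :: 'm \<Rightarrow> 'y)"
    and "is_category (C :: ('o, 'm) cat)" "is_lens C A G" "is_lens C A H"
    and "lens_eq C B (lens_comp F G) (lens_comp F H)"
  shows "lens_eq C A G H"
  using assms is_category_transport_cat is_lens_transport_lens lens_eq_comp_transport_lens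
    lens_eq_transport_lens_iff unfolding lens_mono_def by metis

definition kernel_pair ::
  "('oa, 'ma) cat \<Rightarrow> ('oa \<Rightarrow> 'ob) \<Rightarrow> ('ma \<Rightarrow> 'mb) \<Rightarrow> ('oa \<times> 'oa, 'ma \<times> 'ma) cat" where
  "kernel_pair A Fo Fm = \<lparr>Obj = {(a, a'). a \<in> Obj A \<and> a' \<in> Obj A \<and> Fo a = Fo a'},
     Mor = {(f, f'). f \<in> Mor A \<and> f' \<in> Mor A \<and> Fm f = Fm f'},
     Dom = map_prod (Dom A) (Dom A), Cod = map_prod (Cod A) (Cod A),
     Ide = map_prod (Ide A) (Ide A),
     Comp = (\<lambda>(g, g') (f, f'). (Comp A g f, Comp A g' f'))\<rparr>"

lemma is_category_kernel_pair:
  assumes "is_category A" "is_functor A B Fo Fm"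
  shows "is_category (kernel_pair A Fo Fm)"
proof -
  have get_ends: "Fo (Dom A f) = Dom B (Fm f)" "Fo (Cod A f) = Cod B (Fm f)"
    if "f \<in> Mor A" for f
    using assms(2) that by (auto simp: is_functor_def)
  show ?thesis
    using assms unfolding is_category_def is_functor_def kernel_pair_def
    by (auto simp: split_beta get_ends)
qed

lemma inv_swap: "inv prod.swap = prod.swap"
  by (rule inv_unique_comp) auto

lemma transport_cat_swap_kernel_pair:
  "transport_cat prod.swap prod.swap (kernel_pair A Fo Fm) = kernel_pair A Fo Fm"
  by (auto simp: inv_swap transport_cat_def kernel_pair_def image_iff intro!: ext)

definition kernel_fst ::
  "('oa \<Rightarrow> 'mb \<Rightarrow> 'ma) \<Rightarrow> ('ma \<Rightarrow> 'mb) \<Rightarrow> ('oa \<times> 'oa, 'ma \<times> 'ma, 'oa, 'ma) lens" where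
  "kernel_fst p Fm = (fst, fst, \<lambda>x f. (f, p (snd x) (Fm f)))"

definition kernel_snd ::
  "('oa \<Rightarrow> 'mb \<Rightarrow> 'ma) \<Rightarrow> ('ma \<Rightarrow> 'mb) \<Rightarrow> ('oa \<times> 'oa, 'ma \<times> 'ma, 'oa, 'ma) lens" where
  "kernel_snd p Fm = (snd, snd, \<lambda>x f. (p (fst x) (Fm f), f))"

lemma transport_lens_swap_kernel_fst:
  "transport_lens prod.swap prod.swap (kernel_fst p Fm) = kernel_snd p Fm"
  by (auto simp: inv_swap transport_lens_def kernel_fst_def kernel_snd_def)

lemma is_lens_kernel_fst:
  assumes L: "is_lens A B (Fo, Fm, p)"
  shows "is_lens (kernel_pair A Fo Fm) A (kernel_fst p Fm)"
proof -
  let ?K = "kernel_pair A Fo Fm"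
  note F = is_lens_functor[OF L]
  have get: "Fm f \<in> Mor B" "Dom B (Fm f) = Fo (Dom A f)" "Cod B (Fm f) = Fo (Cod A f)"
    if "f \<in> Mor A" for f
    using F that by (auto simp: is_functor_def)
  have put: "p a' (Fm b) \<in> Mor A" "Dom A (p a' (Fm b)) = a'" "Fm (p a' (Fm b)) = Fm b"
    if "(a, a') \<in> Obj ?K" "b \<in> Mor A" "Dom A b = a" for a a' b
    using is_lens_put[OF L] that get by (auto simp: kernel_pair_def)
  have put_ide: "p a' (Fm (Ide A a)) = Ide A a'" if "(a, a') \<in> Obj ?K" for a a'
    using that F is_lens_put_ide[OF L] by (auto simp: kernel_pair_def is_functor_def)
  have put_comp:
    "p a' (Fm (Comp A b' b)) = Comp A (p (Cod A (p a' (Fm b))) (Fm b')) (p a' (Fm b))"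
    if "(a, a') \<in> Obj ?K" "b \<in> Mor A" "b' \<in> Mor A" "Dom A b = a" "Cod A b = Dom A b'"
    for a a' b b'
  proof -
    have "Dom B (Fm b') = Fo (Cod A (p a' (Fm b)))"
      using put[OF that(1,2,4)] get that(2,3,5) by metis
    then show ?thesis
      using that put[OF that(1,2,4)] get F is_lens_put_comp[OF L]
      by (auto simp: kernel_pair_def is_functor_def)
  qed
  have "is_functor ?K A fst fst"
    by (auto simp: is_functor_def kernel_pair_def split_beta)
  then show ?thesis
    using put put_ide put_comp by (auto simp: is_lens_def kernel_fst_def kernel_pair_def)
qed

lemma is_lens_kernel_snd:
  assumes "is_lens A B (Fo, Fm, p)"
  shows "is_lens (kernel_pair A Fo Fm) A (kernel_snd p Fm)"
  using is_lens_transport_lens[OF is_lens_kernel_fst[OF assms], of prod.swap prod.swap]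
  by (simp add: transport_cat_swap_kernel_pair transport_lens_swap_kernel_fst)

lemma lens_comp_kernel_fst_eq_snd:
  assumes "is_lens A B (Fo, Fm, p)"
  shows "lens_eq (kernel_pair A Fo Fm) B (lens_comp (Fo, Fm, p) (kernel_fst p Fm))
    (lens_comp (Fo, Fm, p) (kernel_snd p Fm))"
  using is_lens_put[OF assms]
  by (auto simp: lens_eq_def lens_comp_def kernel_fst_def kernel_snd_def kernel_pair_def)

lemma lens_mono_cosieve:
  fixes A :: "('oa, 'ma) cat"
  assumes A: "is_category A" and L: "is_lens A B (Fo, Fm, p)"
    and M: "lens_mono (U :: ('x \<times> 'y) itself) A B (Fo, Fm, p)"
    and i: "inj (i :: 'oa \<times> 'oa \<Rightarrow> 'x)" and j: "inj (j :: 'ma \<times> 'ma \<Rightarrow> 'y)"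
  shows "cosieve A B Fo Fm"
proof -
  let ?K = "kernel_pair A Fo Fm"
  have "lens_eq ?K A (kernel_fst p Fm) (kernel_snd p Fm)"
    using lens_mono_transport[OF M i j is_category_kernel_pair[OF A is_lens_functor[OF L]]
        is_lens_kernel_fst[OF L] is_lens_kernel_snd[OF L] lens_comp_kernel_fst_eq_snd[OF L]] .
  then have diagonal_obj: "\<And>x. x \<in> Obj ?K \<Longrightarrow> fst x = snd x"
    and diagonal_mor: "\<And>g. g \<in> Mor ?K \<Longrightarrow> fst g = snd g"
    by (auto simp: lens_eq_def kernel_fst_def kernel_snd_def)
  have "inj_on Fo (Obj A)"
    using diagonal_obj by (auto simp: inj_on_def kernel_pair_def)
  moreover have "\<exists>!a. a \<in> Mor A \<and> Dom A a = x \<and> Fm a = b"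
    if "x \<in> Obj A" "b \<in> Mor B" "Dom B b = Fo x" for x b
  proof (rule ex1I)
    show "p x b \<in> Mor A \<and> Dom A (p x b) = x \<and> Fm (p x b) = b"
      using is_lens_put[OF L that] by blast
    fix a assume "a \<in> Mor A \<and> Dom A a = x \<and> Fm a = b"
    then have "(a, p x b) \<in> Mor ?K"
      using is_lens_put[OF L that] by (simp add: kernel_pair_def)
    then show "a = p x b" using diagonal_mor by fastforce
  qed
  ultimately show ?thesis
    using is_lens_functor[OF L] by (simp add: cosieve_def discrete_opfibration_def)
qed

theorem corollary3p3:
  fixes A :: "('oa, 'ma) cat" and B :: "('ob, 'mb) cat"
    and U :: "('x \<times> 'y) itself"
  assumes "is_category A" and "is_category B"
  shows "(\<forall>Jo Jm. cosieve A B Jo Jm \<longrightarrow>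
            (\<exists>put. is_lens A B (Jo, Jm, put)) \<and>
            (\<forall>put put'. is_lens A B (Jo, Jm, put) \<and> is_lens A B (Jo, Jm, put') \<longrightarrow>
                lens_eq A B (Jo, Jm, put) (Jo, Jm, put')) \<and>
            (\<forall>put. is_lens A B (Jo, Jm, put) \<longrightarrow> lens_mono U A B (Jo, Jm, put)))
       \<and> ((\<exists>i :: 'oa \<times> 'oa \<Rightarrow> 'x. inj i) \<and> (\<exists>j :: 'ma \<times> 'ma \<Rightarrow> 'y. inj j) \<longrightarrow>
          (\<forall>Fo Fm put. is_lens A B (Fo, Fm, put) \<and> lens_mono U A B (Fo, Fm, put) \<longrightarrow>
            cosieve A B Fo Fm))"
proof (intro conjI allI impI)
  fix Jo Jm
  assume "cosieve A B Jo Jm"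
  then have J: "discrete_opfibration A B Jo Jm" by (rule cosieve_discrete_opfibration)
  show "\<exists>put. is_lens A B (Jo, Jm, put)"
    using discrete_opfibration_is_lens[OF assms(1) J] by blast
  show "lens_eq A B (Jo, Jm, put) (Jo, Jm, put')"
    if "is_lens A B (Jo, Jm, put) \<and> is_lens A B (Jo, Jm, put')" for put put'
    using discrete_opfibration_lens_unique[OF J] that by blast
  show "lens_mono U A B (Jo, Jm, put)" if "is_lens A B (Jo, Jm, put)" for put
    using cosieve_lens_mono[OF \<open>cosieve A B Jo Jm\<close> that] .
next
  fix Fo Fm put
  assume "(\<exists>i :: 'oa \<times> 'oa \<Rightarrow> 'x. inj i) \<and> (\<exists>j :: 'ma \<times> 'ma \<Rightarrow> 'y. inj j)"
    and "is_lens A B (Fo, Fm, put) \<and> lens_mono U A B (Fo, Fm, put)"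
  then show "cosieve A B Fo Fm"
    using lens_mono_cosieve[OF assms(1)] by blast
qed

end
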